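(* Let $K$ be a field, $P=K[x_1,\dots,x_n]$, $I$ an ideal of $P$ contained in $\mathfrak{M}=\langle x_1,\dots,x_n\rangle$, $\mathfrak{m}=\mathfrak{M}/I$, and let $\overline G$ be a marked reduced Gröbner basis of $I$. (a) $\#\mathrm{LI}(\overline G)\le\dim_K(\mathrm{Lin}_{\mathfrak M}(I))$. (b) $\dim_K(\mathrm{Cot}_{\mathfrak m}(P/I))\le\mathrm{edim}(P/I)\le\mathrm{sepdim}(P/I)\le n-\#\mathrm{LI}(\overline G)$.
   Context: $\mathrm{Cot}_{\mathfrak m}(R)=\mathfrak m/\mathfrak m^2$. For $f\in\mathfrak M$, $\mathrm{Lin}_{\mathfrak M}(f)$ is the homogeneous degree-one part of $f$, and $\mathrm{Lin}_{\mathfrak M}(I)=\langle\mathrm{Lin}_{\mathfrak M}(f)\mid f\in I\rangle_K$. A marked reduced Gröbner basis of $I$ is $\{(\mathrm{LT}_\sigma(g),g)\mid g\in G\}$ with $G$ the reduced $\sigma$-Gröbner basis of $I$ for a term ordering $\sigma$; $\mathrm{LI}(\overline G)$ is the set of indeterminates occurring as marked leading terms in $\overline G$. The embedding dimension $\mathrm{edim}(P/I)$ is the minimal $m$ such that $P/I\cong K[y_1,\dots,y_m]/I'$ as $K$-algebras for some ideal $I'$. For $f\in P$, $\mathrm{indets}(f)$ is the set of indeterminates dividing some term in the support of $f$; for $f\in\mathfrak M$ with $z$ occurring in $\mathrm{Lin}_{\mathfrak M}(f)$ with coefficient $c\ne 0$ in $f$, $\mathrm{tail}_z(f)=z-\frac1cf$,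 and $f$ is $z$-separating if $z\notin\mathrm{indets}(\mathrm{tail}_z(f))$. For distinct indeterminates $Z=\{z_1,\dots,z_s\}$, a tuple $(f_1,\dots,f_s)$ of nonzero elements of $\mathfrak M$ is coherently $Z$-separating if each $f_i$ is $z_i$-separating and $z_i\notin\mathrm{indets}(f_j)$ for $j\ne i$. The separating embedding dimension is $\mathrm{sepdim}(P/I)=n-\max\{\#Z\mid Z\subseteq X,\ I \text{ contains a coherently } Z\text{-separating tuple}\}$ (with $Z=\emptyset$ allowed). *)

theory Defs
  imports Main "HOL.Vector_Spaces" "HOL-Library.Poly_Mapping"
begin

text \<open>The ring K[x_1,...,x_n] is the set of polynomials involving only x_0,...,x_{n-1}.\<close>

type_synonym 'k mpoly = "(nat \<Rightarrow>\<^sub>0 nat) \<Rightarrow>\<^sub>0 'k"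

definition Var :: "nat \<Rightarrow> ('k::comm_ring_1) mpoly" where
  "Var i = Poly_Mapping.single (Poly_Mapping.single i 1) 1"

definition Const :: "'k::comm_ring_1 \<Rightarrow> 'k mpoly" where
  "Const c = Poly_Mapping.single 0 c"

definition pscale :: "'k::comm_ring_1 \<Rightarrow> 'k mpoly \<Rightarrow> 'k mpoly" where
  "pscale c p = Const c * p"

definition indets :: "('k::zero) mpoly \<Rightarrow> nat set" where
  "indets f = (\<Union>t\<in>Poly_Mapping.keys f. Poly_Mapping.keys t)"

definition Pring :: "nat \<Rightarrow> ('k::comm_ring_1) mpoly set" where
  "Pring n = {f. indets f \<subseteq> {..<n}}"

text \<open>The maximal ideal M = <x_1,...,x_n> of P: polynomials with zero constant term.\<close>
definition Mideal :: "nat \<Rightarrow> ('k::comm_ring_1) mpoly set" where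
  "Mideal n = {f \<in> Pring n. Poly_Mapping.lookup f 0 = 0}"

definition is_ideal :: "nat \<Rightarrow> ('k::comm_ring_1) mpoly set \<Rightarrow> bool" where
  "is_ideal n I \<longleftrightarrow> I \<subseteq> Pring n \<and> 0 \<in> I \<and> (\<forall>a\<in>I. \<forall>b\<in>I. a + b \<in> I)
     \<and> (\<forall>a\<in>I. \<forall>f\<in>Pring n. f * a \<in> I)"

definition ideal_prod :: "('k::comm_ring_1) mpoly set \<Rightarrow> 'k mpoly set \<Rightarrow> 'k mpoly set" where
  "ideal_prod A B = {(\<Sum>i<(k::nat). a i * b i) | a b k. \<forall>i<k. a i \<in> A \<and> b i \<in> B}"

definition deg_mon :: "(nat \<Rightarrow>\<^sub>0 nat) \<Rightarrow> nat" where
  "deg_mon t = (\<Sum>i\<in>Poly_Mapping.keys t. Poly_Mapping.lookup t i)"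

definition Lin :: "('k::comm_ring_1) mpoly \<Rightarrow> 'k mpoly" where
  "Lin f = Abs_poly_mapping (\<lambda>t. if deg_mon t = 1 then Poly_Mapping.lookup f t else 0)"

definition LinI :: "('k::field) mpoly set \<Rightarrow> 'k mpoly set" where
  "LinI I = module.span pscale (Lin ` I)"

definition kdim :: "('k::field) mpoly set \<Rightarrow> nat" where
  "kdim V = vector_space.dim pscale V"

text \<open>Dimension of a quotient vector space V/W (W a subspace of V), taken as the dimension
  of a complementary subspace C of W in V (C \<oplus> W = V).\<close>
definition qdim :: "('k::field) mpoly set \<Rightarrow> 'k mpoly set \<Rightarrow> nat" where
  "qdim V W = kdim (SOME C. module.subspace pscale C \<and> C \<subseteq> V \<and> C \<inter> W = {0}
                          \<and> V = {c + w | c w. c \<in> C \<and> w \<in> W})"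

text \<open>dim_K Cot_m(P/I) where m = M/I: Cot = m/m^2 = (M/I)/((M^2+I)/I) = M/(M^2+I).\<close>
definition cotdim :: "nat \<Rightarrow> ('k::field) mpoly set \<Rightarrow> nat" where
  "cotdim n I = qdim (Mideal n)
      {a + b | a b. a \<in> ideal_prod (Mideal n) (Mideal n) \<and> b \<in> I}"

definition kalg_hom :: "nat \<Rightarrow> nat \<Rightarrow> (('k::field) mpoly \<Rightarrow> 'k mpoly) \<Rightarrow> bool" where
  "kalg_hom n m \<phi> \<longleftrightarrow> \<phi> ` Pring n \<subseteq> Pring m
     \<and> (\<forall>f\<in>Pring n. \<forall>g\<in>Pring n. \<phi> (f + g) = \<phi> f + \<phi> g \<and> \<phi> (f * g) = \<phi> f * \<phi> g)
     \<and> (\<forall>c. \<phi> (Const c) = Const c)"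

text \<open>P_n/I is isomorphic as a K-algebra to P_m/J: there is a K-algebra homomorphism
  P_n -> P_m inducing an isomorphism P_n/I -> P_m/J (kernel of the composite map is I,
  and the composite map is surjective).\<close>
definition quot_iso :: "nat \<Rightarrow> ('k::field) mpoly set \<Rightarrow> nat \<Rightarrow> 'k mpoly set \<Rightarrow> bool" where
  "quot_iso n I m J \<longleftrightarrow> (\<exists>\<phi>. kalg_hom n m \<phi>
      \<and> {f \<in> Pring n. \<phi> f \<in> J} = I
      \<and> (\<forall>q\<in>Pring m. \<exists>f\<in>Pring n. q - \<phi> f \<in> J))"

definition edim :: "nat \<Rightarrow> ('k::field) mpoly set \<Rightarrow> nat" where
  "edim n I = (LEAST m. \<exists>J. is_ideal m J \<and> quot_iso n I m J)"

definition tail :: "nat \<Rightarrow> ('k::field) mpoly \<Rightarrow> 'k mpoly" where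
  "tail z f = Var z - pscale (inverse (Poly_Mapping.lookup f (Poly_Mapping.single z 1))) f"

definition separating :: "nat \<Rightarrow> ('k::field) mpoly \<Rightarrow> bool" where
  "separating z f \<longleftrightarrow> Poly_Mapping.lookup f (Poly_Mapping.single z 1) \<noteq> 0 \<and> z \<notin> indets (tail z f)"

definition coherently_separating :: "nat \<Rightarrow> nat set \<Rightarrow> (nat \<Rightarrow> ('k::field) mpoly) \<Rightarrow> bool" where
  "coherently_separating n Z f \<longleftrightarrow> Z \<subseteq> {..<n} \<and>
     (\<forall>z\<in>Z. f z \<noteq> 0 \<and> f z \<in> Mideal n \<and> separating z (f z)
            \<and> (\<forall>z'\<in>Z. z' \<noteq> z \<longrightarrow> z \<notin> indets (f z')))"

definition sepdim :: "nat \<Rightarrow> ('k::field) mpoly set \<Rightarrow> nat" where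
  "sepdim n I = n - Max {card Z | Z. Z \<subseteq> {..<n} \<and>
                     (\<exists>f. (\<forall>z\<in>Z. f z \<in> I) \<and> coherently_separating n Z f)}"

definition mons :: "nat \<Rightarrow> (nat \<Rightarrow>\<^sub>0 nat) set" where
  "mons n = {t. Poly_Mapping.keys t \<subseteq> {..<n}}"

definition term_order :: "nat \<Rightarrow> ((nat \<Rightarrow>\<^sub>0 nat) \<Rightarrow> (nat \<Rightarrow>\<^sub>0 nat) \<Rightarrow> bool) \<Rightarrow> bool" where
  "term_order n le \<longleftrightarrow>
     (\<forall>s\<in>mons n. le s s)
   \<and> (\<forall>s\<in>mons n. \<forall>t\<in>mons n. le s t \<and> le t s \<longrightarrow> s = t)
   \<and> (\<forall>s\<in>mons n. \<forall>t\<in>mons n. \<forall>u\<in>mons n. le s t \<and> le t u \<longrightarrow> le s u)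
   \<and> (\<forall>s\<in>mons n. \<forall>t\<in>mons n. le s t \<or> le t s)
   \<and> (\<forall>t\<in>mons n. le 0 t)
   \<and> (\<forall>s\<in>mons n. \<forall>t\<in>mons n. \<forall>u\<in>mons n. le s t \<longrightarrow> le (s + u) (t + u))"

definition lm :: "((nat \<Rightarrow>\<^sub>0 nat) \<Rightarrow> (nat \<Rightarrow>\<^sub>0 nat) \<Rightarrow> bool) \<Rightarrow> ('k::zero) mpoly \<Rightarrow> nat \<Rightarrow>\<^sub>0 nat" where
  "lm le f = (THE t. t \<in> Poly_Mapping.keys f \<and> (\<forall>s\<in>Poly_Mapping.keys f. le s t))"

definition LT :: "((nat \<Rightarrow>\<^sub>0 nat) \<Rightarrow> (nat \<Rightarrow>\<^sub>0 nat) \<Rightarrow> bool) \<Rightarrow> ('k::comm_ring_1) mpoly \<Rightarrow> 'k mpoly" where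
  "LT le f = Poly_Mapping.single (lm le f) (Poly_Mapping.lookup f (lm le f))"

definition mdvd :: "(nat \<Rightarrow>\<^sub>0 nat) \<Rightarrow> (nat \<Rightarrow>\<^sub>0 nat) \<Rightarrow> bool" where
  "mdvd s t \<longleftrightarrow> (\<forall>i. Poly_Mapping.lookup s i \<le> Poly_Mapping.lookup t i)"

definition reduced_GB :: "nat \<Rightarrow> ((nat \<Rightarrow>\<^sub>0 nat) \<Rightarrow> (nat \<Rightarrow>\<^sub>0 nat) \<Rightarrow> bool)
                          \<Rightarrow> ('k::field) mpoly set \<Rightarrow> 'k mpoly set \<Rightarrow> bool" where
  "reduced_GB n le I G \<longleftrightarrow> finite G \<and> G \<subseteq> I - {0}
     \<and> (\<forall>f\<in>I - {0}. \<exists>g\<in>G. mdvd (lm le g) (lm le f))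
     \<and> (\<forall>g\<in>G. Poly_Mapping.lookup g (lm le g) = 1)
     \<and> (\<forall>g\<in>G. \<forall>t\<in>Poly_Mapping.keys g. \<forall>g'\<in>G. (g' \<noteq> g \<or> t \<noteq> lm le g) \<longrightarrow> \<not> mdvd (lm le g') t)"

definition LI :: "nat \<Rightarrow> ((nat \<Rightarrow>\<^sub>0 nat) \<Rightarrow> (nat \<Rightarrow>\<^sub>0 nat) \<Rightarrow> bool) \<Rightarrow> ('k::field) mpoly set \<Rightarrow> nat set" where
  "LI n le G = {i. i < n \<and> (\<exists>g\<in>G. LT le g = Var i)}"

end

(*
  The basis elements g_z whose marked leading terms are indeterminates x_z are z-separating, and
  reducedness makes them coherent: x_z occurs in no other basis element.  In particular the
  coefficient of x_k in Lin(g_z) is the Kronecker delta, so the Lin(g_z) are independent, which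
  gives (a) and the last inequality of (b).  Substituting the tails of a coherently Z-separating
  tuple for the variables of Z is the identity modulo I and eliminates those variables, which
  presents P/I with n - #Z generators, so edim <= sepdim.  Finally, given P_n/I = P_m/J, lifts of
  the m variables of P_m span M modulo M^2 + I, so dim Cot <= m.
*)
theory Submission
  imports Defs
begin

section \<open>Polynomial arithmetic\<close>

lemma lookup_pscale [simp]: "Poly_Mapping.lookup (pscale c p) t = c * Poly_Mapping.lookup p t"
  unfolding pscale_def Const_def
  by (simp flip: mult_map_scale_conv_mult add: Poly_Mapping.map.rep_eq when_def)

interpretation vs: vector_space "pscale :: 'k::field \<Rightarrow> 'k mpoly \<Rightarrow> 'k mpoly"
  by unfold_locales (auto intro!: poly_mapping_eqI simp: lookup_add algebra_simps)

lemma Const_0 [simp]: "Const 0 = 0"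
  by (simp add: Const_def)

lemma Const_1 [simp]: "Const 1 = 1"
  by (simp add: Const_def)

lemma lookup_Const_mult [simp]: "Poly_Mapping.lookup (Const c * p) t = c * Poly_Mapping.lookup p t"
  using lookup_pscale[unfolded pscale_def] .

lemma Const_add: "Const (a + b) = Const a + Const b"
  by (simp add: Const_def single_add)

lemma Const_mult: "Const (a * b) = Const a * Const b"
  by (simp add: Const_def mult_single)

lemma Const_uminus: "Const (- a) = - Const a"
  by (simp add: Const_def single_uminus)

lemma lookup_Const: "Poly_Mapping.lookup (Const c) t = (if t = 0 then c else 0)"
  by (simp add: Const_def lookup_single when_def)

lemma lookup_Var: "Poly_Mapping.lookup (Var i :: 'k::comm_ring_1 mpoly) t = (if t = Poly_Mapping.single i 1 then 1 else 0)"
  by (simp add: Var_def lookup_single when_def)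

lemma single_eq_zero_iff [simp]: "Poly_Mapping.single k v = 0 \<longleftrightarrow> v = 0"
  by (metis lookup_single_eq lookup_zero single_zero)

lemma single_eq_single_iff [simp]: "v \<noteq> 0 \<Longrightarrow> Poly_Mapping.single i v = Poly_Mapping.single j v \<longleftrightarrow> i = j"
  by (metis lookup_single_eq lookup_single_not_eq)

lemma keys_add_nat: "Poly_Mapping.keys (s + t) = Poly_Mapping.keys s \<union> Poly_Mapping.keys (t :: 'a \<Rightarrow>\<^sub>0 nat)"
  by (auto simp: in_keys_iff lookup_add)

lemma poly_mapping_sum_single:
  "(p :: 'a \<Rightarrow>\<^sub>0 'b::comm_monoid_add) = (\<Sum>t\<in>Poly_Mapping.keys p. Poly_Mapping.single t (Poly_Mapping.lookup p t))"
proof (rule poly_mapping_eqI)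
  fix k
  have "(\<Sum>t\<in>Poly_Mapping.keys p. Poly_Mapping.lookup (Poly_Mapping.single t (Poly_Mapping.lookup p t)) k)
       = (\<Sum>t\<in>Poly_Mapping.keys p. if t = k then Poly_Mapping.lookup p t else 0)"
    by (rule sum.cong) (auto simp: lookup_single when_def)
  then show "Poly_Mapping.lookup p k = Poly_Mapping.lookup (\<Sum>t\<in>Poly_Mapping.keys p. Poly_Mapping.single t (Poly_Mapping.lookup p t)) k"
    by (simp add: lookup_sum in_keys_iff)
qed

lemma indets_add: "indets (p + q) \<subseteq> indets p \<union> indets q"
  unfolding indets_def using keys_add[of p q] by auto

lemma indets_mult: "indets (p * q) \<subseteq> indets p \<union> indets q"
  unfolding indets_def using keys_mult[of p q] by (force simp: keys_add_nat)

lemma indets_Const [simp]: "indets (Const c) = {}"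
  by (simp add: indets_def Const_def)

lemma indets_zero [simp]: "indets 0 = {}"
  by (simp add: indets_def)

lemma indets_uminus [simp]: "indets (- p) = indets (p :: 'k::ab_group_add mpoly)"
  by (simp add: indets_def keys_def)

lemma indets_diff: "indets (p - q) \<subseteq> indets p \<union> indets (q :: 'k::ab_group_add mpoly)"
  using indets_add[of p "- q"] by simp

lemma indets_Var: "indets (Var i :: 'k::comm_ring_1 mpoly) \<subseteq> {i}"
  by (auto simp: indets_def Var_def)

lemma indets_single: "indets (Poly_Mapping.single t c) \<subseteq> Poly_Mapping.keys t"
  by (auto simp: indets_def)

lemma indets_tail: "indets (tail i f) \<subseteq> {i} \<union> indets (f :: 'k::field mpoly)"
  unfolding tail_def pscale_def using indets_diff indets_Var indets_mult indets_Const by fastforce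

lemma Pring_add: "p \<in> Pring n \<Longrightarrow> q \<in> Pring n \<Longrightarrow> p + q \<in> Pring n"
  unfolding Pring_def using indets_add by blast

lemma Pring_mult: "p \<in> Pring n \<Longrightarrow> q \<in> Pring n \<Longrightarrow> p * q \<in> Pring n"
  unfolding Pring_def using indets_mult by blast

lemma Pring_diff: "p \<in> Pring n \<Longrightarrow> q \<in> Pring n \<Longrightarrow> p - q \<in> Pring n"
  unfolding Pring_def using indets_diff by blast

lemma Pring_Const [simp]: "Const c \<in> Pring n"
  by (simp add: Pring_def)

lemma Pring_Var: "i < n \<Longrightarrow> Var i \<in> Pring n"
  unfolding Pring_def using indets_Var by fastforce

lemma zero_in_Mideal [simp]: "0 \<in> Mideal n"
  by (simp add: Mideal_def Pring_def)

lemma Mideal_add: "a \<in> Mideal n \<Longrightarrow> b \<in> Mideal n \<Longrightarrow> a + b \<in> Mideal n"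
  by (simp add: Mideal_def Pring_add lookup_add)

lemma Var_in_Mideal: "i < n \<Longrightarrow> Var i \<in> Mideal n"
  by (simp add: Mideal_def Pring_Var lookup_Var)

lemma Mideal_pscale: "a \<in> Mideal n \<Longrightarrow> pscale c a \<in> Mideal n"
  by (simp add: Mideal_def pscale_def Pring_mult)

lemma Mideal_subspace: "vs.subspace (Mideal n :: 'k::field mpoly set)"
  unfolding vs.subspace_def by (auto intro: Mideal_add Mideal_pscale)

section \<open>Substitution\<close>

definition monval :: "(nat \<Rightarrow> 'k::comm_ring_1 mpoly) \<Rightarrow> (nat \<Rightarrow>\<^sub>0 nat) \<Rightarrow> 'k mpoly" where
  "monval \<sigma> t = (\<Prod>i\<in>Poly_Mapping.keys t. \<sigma> i ^ Poly_Mapping.lookup t i)"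

definition subst :: "(nat \<Rightarrow> 'k::comm_ring_1 mpoly) \<Rightarrow> 'k mpoly \<Rightarrow> 'k mpoly" where
  "subst \<sigma> p = (\<Sum>t\<in>Poly_Mapping.keys p. Const (Poly_Mapping.lookup p t) * monval \<sigma> t)"

lemma monval_superset:
  "finite A \<Longrightarrow> Poly_Mapping.keys t \<subseteq> A \<Longrightarrow> monval \<sigma> t = (\<Prod>i\<in>A. \<sigma> i ^ Poly_Mapping.lookup t i)"
  unfolding monval_def by (rule prod.mono_neutral_left) (auto simp: in_keys_iff)

lemma monval_add: "monval \<sigma> (s + t) = monval \<sigma> s * monval \<sigma> t"
proof -
  let ?A = "Poly_Mapping.keys s \<union> Poly_Mapping.keys t"
  have "monval \<sigma> (s + t) = (\<Prod>i\<in>?A. \<sigma> i ^ Poly_Mapping.lookup (s + t) i)"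
    by (rule monval_superset) (auto simp: keys_add_nat)
  also have "\<dots> = (\<Prod>i\<in>?A. \<sigma> i ^ Poly_Mapping.lookup s i) * (\<Prod>i\<in>?A. \<sigma> i ^ Poly_Mapping.lookup t i)"
    by (simp add: lookup_add power_add prod.distrib)
  also have "\<dots> = monval \<sigma> s * monval \<sigma> t"
    by (simp add: monval_superset[symmetric])
  finally show ?thesis .
qed

lemma subst_superset:
  "finite A \<Longrightarrow> Poly_Mapping.keys p \<subseteq> A \<Longrightarrow>
   subst \<sigma> p = (\<Sum>t\<in>A. Const (Poly_Mapping.lookup p t) * monval \<sigma> t)"
  unfolding subst_def by (rule sum.mono_neutral_left) (auto simp: in_keys_iff)

lemma subst_add: "subst \<sigma> (p + q) = subst \<sigma> p + subst \<sigma> q"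
proof -
  let ?A = "Poly_Mapping.keys p \<union> Poly_Mapping.keys q"
  have "subst \<sigma> (p + q) = (\<Sum>t\<in>?A. Const (Poly_Mapping.lookup (p + q) t) * monval \<sigma> t)"
    by (rule subst_superset) (use keys_add[of p q] in auto)
  also have "\<dots> = (\<Sum>t\<in>?A. Const (Poly_Mapping.lookup p t) * monval \<sigma> t)
      + (\<Sum>t\<in>?A. Const (Poly_Mapping.lookup q t) * monval \<sigma> t)"
    by (simp add: lookup_add Const_add distrib_right sum.distrib)
  also have "\<dots> = subst \<sigma> p + subst \<sigma> q"
    by (simp add: subst_superset[symmetric])
  finally show ?thesis .
qed

lemma subst_zero [simp]: "subst \<sigma> 0 = 0"
  by (simp add: subst_def)

lemma subst_sum: "subst \<sigma> (sum f A) = (\<Sum>a\<in>A. subst \<sigma> (f a))"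
  by (induction A rule: infinite_finite_induct) (auto simp: subst_add)

lemma subst_single: "subst \<sigma> (Poly_Mapping.single t c) = Const c * monval \<sigma> t"
  by (subst subst_superset[of "{t}"]) (auto simp: lookup_single)

lemma subst_mult: "subst \<sigma> (p * q) = subst \<sigma> p * subst \<sigma> q"
proof -
  let ?c = "Poly_Mapping.lookup p" and ?d = "Poly_Mapping.lookup q"
  have "p * q = (\<Sum>s\<in>Poly_Mapping.keys p. \<Sum>t\<in>Poly_Mapping.keys q. Poly_Mapping.single (s + t) (?c s * ?d t))"
    by (subst (1 2) poly_mapping_sum_single) (simp add: sum_product mult_single)
  then have "subst \<sigma> (p * q) = (\<Sum>s\<in>Poly_Mapping.keys p. \<Sum>t\<in>Poly_Mapping.keys q.
      Const (?c s * ?d t) * monval \<sigma> (s + t))"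
    by (simp add: subst_sum subst_single)
  also have "\<dots> = (\<Sum>s\<in>Poly_Mapping.keys p. \<Sum>t\<in>Poly_Mapping.keys q.
      (Const (?c s) * monval \<sigma> s) * (Const (?d t) * monval \<sigma> t))"
    by (simp add: Const_mult monval_add algebra_simps)
  also have "\<dots> = subst \<sigma> p * subst \<sigma> q"
    by (simp add: subst_def sum_product)
  finally show ?thesis .
qed

lemma subst_Const [simp]: "subst \<sigma> (Const c) = Const c"
  by (simp add: Const_def subst_single monval_def)

lemma subst_Var [simp]: "subst \<sigma> (Var i) = \<sigma> i"
  by (simp add: Var_def subst_single monval_def)


lemma subst_cong: "(\<And>i. i \<in> indets p \<Longrightarrow> \<sigma> i = \<tau> i) \<Longrightarrow> subst \<sigma> p = subst \<tau> p"
  unfolding subst_def monval_def indets_def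
  by (intro sum.cong refl arg_cong2[where f="(*)"] prod.cong arg_cong2[where f="(^)"]) auto

lemma monval_Var: "monval Var t = Poly_Mapping.single t (1::'k::comm_ring_1)"
proof -
  have pow: "Var i ^ k = Poly_Mapping.single (Poly_Mapping.single i k) (1::'k)" for i k
    by (induction k) (simp_all add: Var_def mult_single flip: single_add)
  have prod: "(\<Prod>i\<in>A. Poly_Mapping.single (f i) (1::'k)) = Poly_Mapping.single (\<Sum>i\<in>A. f i) 1"
    for A :: "nat set" and f
    by (induction A rule: infinite_finite_induct) (simp_all add: mult_single)
  show ?thesis
    unfolding monval_def pow prod by (simp flip: poly_mapping_sum_single)
qed

lemma subst_Var_id [simp]: "subst Var p = (p :: 'k::comm_ring_1 mpoly)"
  unfolding subst_def monval_Var by (simp add: Const_def mult_single flip: poly_mapping_sum_single)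

lemma subst_mem_subring:
  assumes add: "\<And>a b. a \<in> S \<Longrightarrow> b \<in> S \<Longrightarrow> a + b \<in> S"
    and mult: "\<And>a b. a \<in> S \<Longrightarrow> b \<in> S \<Longrightarrow> a * b \<in> S"
    and const: "\<And>c. Const c \<in> S"
    and var: "\<And>i. i \<in> indets p \<Longrightarrow> \<sigma> i \<in> S"
  shows "subst \<sigma> p \<in> S"
proof -
  have "prod f A \<in> S" if "\<And>a. a \<in> A \<Longrightarrow> f a \<in> S" for f and A :: "nat set"
    using that by (induction A rule: infinite_finite_induct) (auto intro: mult const[of 1, simplified])
  moreover have "x ^ k \<in> S" if "x \<in> S" for x k
    using that by (induction k) (auto intro: mult const[of 1, simplified])
  ultimately have "monval \<sigma> t \<in> S" if "t \<in> Poly_Mapping.keys p" for t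
    unfolding monval_def using that var by (metis (no_types, lifting) UN_I indets_def)
  moreover have "sum f A \<in> S" if "\<And>a. a \<in> A \<Longrightarrow> f a \<in> S" for f and A :: "(nat \<Rightarrow>\<^sub>0 nat) set"
    using that by (induction A rule: infinite_finite_induct) (auto intro: add const[of 0, simplified])
  ultimately show ?thesis
    unfolding subst_def by (meson mult const)
qed

lemma indets_subst: "indets (subst \<sigma> p) \<subseteq> (\<Union>i\<in>indets p. indets (\<sigma> i))"
proof -
  have "subst \<sigma> p \<in> {q. indets q \<subseteq> (\<Union>i\<in>indets p. indets (\<sigma> i))}"
    by (rule subst_mem_subring) (use indets_add indets_mult in \<open>force+\<close>)
  then show ?thesis by simp
qed

lemma Pring_subst: "(\<And>i. i \<in> indets p \<Longrightarrow> \<sigma> i \<in> Pring m) \<Longrightarrow> subst \<sigma> p \<in> Pring m"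
  by (rule subst_mem_subring) (auto intro: Pring_add Pring_mult)

lemma hom_subst:
  assumes add: "\<And>a b. a \<in> S \<Longrightarrow> b \<in> S \<Longrightarrow> \<psi> (a + b) = \<psi> a + \<psi> b"
    and mult: "\<And>a b. a \<in> S \<Longrightarrow> b \<in> S \<Longrightarrow> \<psi> (a * b) = \<psi> a * \<psi> b"
    and const: "\<And>c. \<psi> (Const c) = Const c"
    and S_add: "\<And>a b. a \<in> S \<Longrightarrow> b \<in> S \<Longrightarrow> a + b \<in> S"
    and S_mult: "\<And>a b. a \<in> S \<Longrightarrow> b \<in> S \<Longrightarrow> a * b \<in> S"
    and S_const: "\<And>c. Const c \<in> S"
    and var: "\<And>i. i \<in> indets p \<Longrightarrow> \<sigma> i \<in> S"
  shows "\<psi> (subst \<sigma> p) = subst (\<psi> \<circ> \<sigma>) (p :: 'k::comm_ring_1 mpoly)"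
proof -
  \<comment> \<open>Structural induction on \<open>p\<close>: \<open>?Q\<close> is closed under the ring operations and contains the
    variables, hence contains \<open>subst Var p = p\<close>.\<close>
  let ?Q = "{q. indets q \<subseteq> indets p \<and> subst \<sigma> q \<in> S \<and> \<psi> (subst \<sigma> q) = subst (\<psi> \<circ> \<sigma>) q}"
  have "subst Var p \<in> ?Q"
  proof (rule subst_mem_subring)
    fix a b assume "a \<in> ?Q" "b \<in> ?Q"
    then show "a + b \<in> ?Q" "a * b \<in> ?Q"
      using indets_add[of a b] indets_mult[of a b]
      by (auto simp: subst_add subst_mult add mult S_add S_mult)
  qed (use indets_Var var in \<open>auto simp: const S_const\<close>)
  then show ?thesis by simp
qed

lemma subst_subst: "subst \<tau> (subst \<sigma> p) = subst (\<lambda>i. subst \<tau> (\<sigma> i)) p"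
  using hom_subst[where S = UNIV and \<psi> = "subst \<tau>" and \<sigma> = \<sigma> and p = p]
  by (simp add: subst_add subst_mult comp_def)

lemma subst_zero_eq_Const:
  "subst (\<lambda>_. 0) p = Const (Poly_Mapping.lookup (p :: 'k::comm_ring_1 mpoly) 0)"
proof -
  have monval_zero: "monval (\<lambda>_. 0 :: 'k mpoly) t = (if t = 0 then 1 else 0)" for t
  proof (cases "t = 0")
    case False
    then obtain i where i: "i \<in> Poly_Mapping.keys t"
      by (metis in_keys_iff lookup_zero poly_mapping_eqI)
    then have "(0::'k mpoly) ^ Poly_Mapping.lookup t i = 0"
      by (simp add: in_keys_iff zero_power)
    then show ?thesis
      unfolding monval_def using i False by (auto intro: prod_zero)
  qed (simp add: monval_def)
  have "subst (\<lambda>_. 0) p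
      = (\<Sum>t\<in>insert 0 (Poly_Mapping.keys p). Const (Poly_Mapping.lookup p t) * monval (\<lambda>_. 0) t)"
    by (rule subst_superset) auto
  also have "\<dots> = (\<Sum>t\<in>insert 0 (Poly_Mapping.keys p). if t = 0 then Const (Poly_Mapping.lookup p t) else 0)"
    by (rule sum.cong) (auto simp: monval_zero)
  finally show ?thesis by simp
qed

lemma lookup_mult_zero:
  "Poly_Mapping.lookup (p * q) 0 = Poly_Mapping.lookup p 0 * Poly_Mapping.lookup (q :: 'k::comm_ring_1 mpoly) 0"
proof -
  have "Const (Poly_Mapping.lookup (p * q) 0) = Const (Poly_Mapping.lookup p 0 * Poly_Mapping.lookup q 0)"
    using subst_mult[of "\<lambda>_. 0" p q] by (simp add: subst_zero_eq_Const Const_mult)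
  then show ?thesis
    using lookup_Const[of _ 0] by metis
qed

lemma Mideal_mult: "a \<in> Mideal n \<Longrightarrow> b \<in> Mideal n \<Longrightarrow> a * b \<in> Mideal n"
  by (simp add: Mideal_def Pring_mult lookup_mult_zero)

section \<open>Ideals\<close>

context
  fixes n :: nat and I :: "'k::comm_ring_1 mpoly set"
  assumes I: "is_ideal n I"
begin

lemma ideal_subset_Pring: "I \<subseteq> Pring n"
  using I by (simp add: is_ideal_def)

lemma ideal_zero: "0 \<in> I"
  using I by (simp add: is_ideal_def)

lemma ideal_add: "a \<in> I \<Longrightarrow> b \<in> I \<Longrightarrow> a + b \<in> I"
  using I by (simp add: is_ideal_def)

lemma ideal_mult: "f \<in> Pring n \<Longrightarrow> a \<in> I \<Longrightarrow> f * a \<in> I"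
  using I by (simp add: is_ideal_def)

lemma ideal_diff: "a \<in> I \<Longrightarrow> b \<in> I \<Longrightarrow> a - b \<in> I"
  using ideal_add[of a "Const (- 1) * b"] ideal_mult[OF Pring_Const[of "- 1"], of b]
  by (simp add: Const_uminus)

lemma subst_diff_in_ideal:
  assumes "\<And>i. i \<in> indets p \<Longrightarrow> \<sigma> i \<in> Pring n \<and> \<tau> i \<in> Pring n \<and> \<sigma> i - \<tau> i \<in> I"
  shows "subst \<sigma> p - subst \<tau> p \<in> I"
proof -
  let ?Q = "{q. indets q \<subseteq> indets p \<and> subst \<sigma> q \<in> Pring n \<and> subst \<tau> q \<in> Pring n
               \<and> subst \<sigma> q - subst \<tau> q \<in> I}"
  have "subst Var p \<in> ?Q"
  proof (rule subst_mem_subring)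
    fix a b assume a: "a \<in> ?Q" and b: "b \<in> ?Q"
    have "subst \<sigma> (a + b) - subst \<tau> (a + b) \<in> I"
      using a b ideal_add[of "subst \<sigma> a - subst \<tau> a" "subst \<sigma> b - subst \<tau> b"]
      by (simp add: subst_add diff_add_eq add_diff_eq diff_diff_eq2 diff_diff_add add.commute add.left_commute)
    then show "a + b \<in> ?Q"
      using a b indets_add[of a b] by (auto simp: subst_add Pring_add)
    have "subst \<sigma> (a * b) - subst \<tau> (a * b)
        = subst \<sigma> a * (subst \<sigma> b - subst \<tau> b) + subst \<tau> b * (subst \<sigma> a - subst \<tau> a)"
      by (simp add: subst_mult algebra_simps)
    then show "a * b \<in> ?Q"
      using a b indets_mult[of a b] by (auto simp: subst_mult Pring_mult ideal_add ideal_mult)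
  qed (use assms indets_Var ideal_zero in auto)
  then show ?thesis by simp
qed

end

section \<open>Leading monomials\<close>

lemma keys_subset_mons: "f \<in> Pring n \<Longrightarrow> Poly_Mapping.keys f \<subseteq> mons n"
  unfolding Pring_def mons_def indets_def by auto

lemma term_order_finite_max:
  assumes le: "term_order n le" and "finite A" "A \<noteq> {}" "A \<subseteq> mons n"
  shows "\<exists>t\<in>A. \<forall>s\<in>A. le s t"
  using assms(2-4)
proof (induction A rule: finite_ne_induct)
  case (singleton x)
  then show ?case using le unfolding term_order_def by auto
next
  case (insert x F)
  then obtain t where t: "t \<in> F" "\<forall>s\<in>F. le s t" by auto
  have x: "x \<in> mons n" and "t \<in> mons n" using insert t by auto
  show ?case
  proof (cases "le x t")
    case False
    then have "le t x" using le x \<open>t \<in> mons n\<close> unfolding term_order_def by blast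
    have trans: "\<And>a b c. a \<in> mons n \<Longrightarrow> b \<in> mons n \<Longrightarrow> c \<in> mons n \<Longrightarrow> le a b \<Longrightarrow> le b c \<Longrightarrow> le a c"
      using le unfolding term_order_def by blast
    have "\<forall>s\<in>F. le s x"
      using trans[of _ t x] t x \<open>t \<in> mons n\<close> \<open>le t x\<close> insert.prems by auto
    then show ?thesis using le x unfolding term_order_def by auto
  qed (use t in auto)
qed

lemma lm_greatest:
  assumes le: "term_order n le" and f: "f \<in> Pring n" "f \<noteq> 0"
  shows "lm le f \<in> Poly_Mapping.keys f" "\<And>s. s \<in> Poly_Mapping.keys f \<Longrightarrow> le s (lm le f)"
proof -
  have keys: "Poly_Mapping.keys f \<subseteq> mons n" using keys_subset_mons f by blast
  obtain t where t: "t \<in> Poly_Mapping.keys f" "\<forall>s\<in>Poly_Mapping.keys f. le s t"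
    using term_order_finite_max[OF le _ _ keys] f by auto
  have "lm le f = t" unfolding lm_def
  proof (rule the_equality)
    fix t' assume "t' \<in> Poly_Mapping.keys f \<and> (\<forall>s\<in>Poly_Mapping.keys f. le s t')"
    then show "t' = t" using t keys le unfolding term_order_def by (meson subsetD)
  qed (use t in auto)
  then show "lm le f \<in> Poly_Mapping.keys f" "\<And>s. s \<in> Poly_Mapping.keys f \<Longrightarrow> le s (lm le f)"
    using t by auto
qed

lemma LT_eq_Var:
  assumes "LT le g = Var i"
  shows "lm le g = Poly_Mapping.single i 1" "Poly_Mapping.lookup g (lm le g) = (1::'k::comm_ring_1)"
proof -
  have "Poly_Mapping.lookup (LT le g) (Poly_Mapping.single i 1) = (1::'k)"
    using assms by (simp add: lookup_Var)
  then show "lm le g = Poly_Mapping.single i 1" "Poly_Mapping.lookup g (lm le g) = (1::'k)"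
    unfolding LT_def by (auto simp: lookup_single when_def split: if_splits)
qed

text \<open>By monotonicity of the term order, a term divisible by \<open>x\<^sub>i\<close> is at least \<open>x\<^sub>i\<close>.\<close>

lemma lm_eq_Var_not_in_other_terms:
  assumes le: "term_order n le" and g: "g \<in> Pring n" "g \<noteq> 0"
    and lm: "lm le g = Poly_Mapping.single i 1"
    and t: "t \<in> Poly_Mapping.keys g" "t \<noteq> Poly_Mapping.single i 1"
  shows "i \<notin> Poly_Mapping.keys t"
proof
  assume "i \<in> Poly_Mapping.keys t"
  define u where "u = t - Poly_Mapping.single i 1"
  have tu: "t = Poly_Mapping.single i 1 + u"
    using \<open>i \<in> Poly_Mapping.keys t\<close>
    by (auto intro!: poly_mapping_eqI simp: u_def lookup_add lookup_minus lookup_single when_def in_keys_iff)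
  have t_mons: "t \<in> mons n" using keys_subset_mons g t by blast
  have i_mons: "Poly_Mapping.single i 1 \<in> mons n"
    using lm_greatest(1)[OF le g] lm keys_subset_mons[OF g(1)] by auto
  have "Poly_Mapping.keys u \<subseteq> Poly_Mapping.keys t"
    using tu by (auto simp: keys_add_nat)
  then have u_mons: "u \<in> mons n" and "0 \<in> mons n"
    using t_mons by (auto simp: mons_def)
  then have "le (0 + Poly_Mapping.single i 1) (u + Poly_Mapping.single i 1)"
    using le i_mons unfolding term_order_def by blast
  then have "le (Poly_Mapping.single i 1) t" using tu by (simp add: add.commute)
  moreover have "le t (Poly_Mapping.single i 1)" using lm_greatest(2)[OF le g] lm t by auto
  ultimately show False using le t_mons i_mons t(2) unfolding term_order_def by meson
qed

section \<open>Linear algebra\<close>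

context vector_space
begin

lemma independent_card_le_dim:
  assumes "independent B" "B \<subseteq> V" "V \<subseteq> span W" "finite W"
  shows "card B \<le> dim V"
proof -
  obtain A where A: "A \<subseteq> V" "independent A" "V \<subseteq> span A" "card A = dim V"
    by (rule basis_exists)
  have "finite A"
    using independent_span_bound[OF assms(4) A(2)] A(1) assms(3) by auto
  moreover have "B \<subseteq> span A" using assms(2) A(3) by auto
  ultimately show ?thesis
    using independent_span_bound[OF _ assms(1)] A(4) by metis
qed

lemma span_diff_inter_span_subset:
  assumes "independent B" "X \<subseteq> B"
  shows "span (B - X) \<inter> span X \<subseteq> {0}"
proof
  fix x assume x: "x \<in> span (B - X) \<inter> span X"
  obtain t1 r1 where t1: "finite t1" "t1 \<subseteq> B - X" "x = (\<Sum>a\<in>t1. r1 a *s a)"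
    using x by (auto simp: span_explicit)
  obtain t2 r2 where t2: "finite t2" "t2 \<subseteq> X" "x = (\<Sum>a\<in>t2. r2 a *s a)"
    using x by (auto simp: span_explicit)
  define u where "u v = (if v \<in> t1 then r1 v else - r2 v)" for v
  have disj: "t1 \<inter> t2 = {}" using t1 t2 by auto
  have "(\<Sum>v\<in>t1 \<union> t2. u v *s v) = (\<Sum>v\<in>t1. u v *s v) + (\<Sum>v\<in>t2. u v *s v)"
    by (rule sum.union_disjoint) (use t1 t2 disj in auto)
  also have "(\<Sum>v\<in>t1. u v *s v) = x" using t1 by (simp add: u_def)
  also have "(\<Sum>v\<in>t2. u v *s v) = - x"
    using disj t2(3) by (simp add: u_def sum_negf[symmetric] cong: sum.cong) (auto intro!: sum.cong)
  finally have "(\<Sum>v\<in>t1 \<union> t2. u v *s v) = 0" by simp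
  moreover have "t1 \<union> t2 \<subseteq> B" using t1 t2 assms(2) by auto
  ultimately have "u v = 0" if "v \<in> t1" for v
    using independentD[OF assms(1)] t1(1) t2(1) that by blast
  then have "\<forall>v\<in>t1. r1 v = 0" by (simp add: u_def)
  then show "x \<in> {0}" using t1 by simp
qed

lemma complement_exists:
  assumes W: "subspace W" and M: "subspace M" and "W \<subseteq> M"
  shows "\<exists>C. subspace C \<and> C \<subseteq> M \<and> C \<inter> W = {0} \<and> M = {c + w | c w. c \<in> C \<and> w \<in> W}"
proof -
  obtain BW where BW: "BW \<subseteq> W" "independent BW" "W \<subseteq> span BW"
    using maximal_independent_subset[of W] by blast
  obtain B where B: "BW \<subseteq> B" "B \<subseteq> M" "independent B" "M \<subseteq> span B"
    using maximal_independent_subset_extend[of BW M] BW assms(3) by blast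
  have span_BW: "span BW = W" using BW W by (simp add: span_subspace)
  let ?C = "span (B - BW)"
  have "?C \<subseteq> M" using B M by (metis Diff_subset dual_order.trans span_minimal)
  moreover have "?C \<inter> W = {0}"
    using span_diff_inter_span_subset[OF B(3,1)] span_BW W subspace_0 by auto
  moreover have "M = {c + w | c w. c \<in> ?C \<and> w \<in> W}"
  proof
    have "B = (B - BW) \<union> BW" using B(1) by auto
    then show "M \<subseteq> {c + w | c w. c \<in> ?C \<and> w \<in> W}"
      using B(4) span_Un[of "B - BW" BW] span_BW by simp
    show "{c + w | c w. c \<in> ?C \<and> w \<in> W} \<subseteq> M"
      using \<open>?C \<subseteq> M\<close> assms(3) M by (auto intro: subspace_add)
  qed
  ultimately show ?thesis by blast
qed

lemma independent_image_sub:
  assumes C: "subspace C" and W: "subspace W" and CW: "C \<inter> W \<subseteq> {0}"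
    and B: "independent B" "B \<subseteq> C" and w: "\<And>b. b \<in> B \<Longrightarrow> w b \<in> W"
  shows "inj_on (\<lambda>b. b - w b) B" "independent ((\<lambda>b. b - w b) ` B)"
proof -
  define d where "d b = b - w b" for b
  have coeffs_zero: "u b = 0"
    if T: "finite T" "T \<subseteq> B" and sum: "(\<Sum>b\<in>T. u b *s d b) = 0" and b: "b \<in> T" for T u b
  proof -
    have eq: "(\<Sum>b\<in>T. u b *s b) = (\<Sum>b\<in>T. u b *s w b)"
      using sum by (simp add: d_def scale_right_diff_distrib sum_subtractf)
    have "(\<Sum>b\<in>T. u b *s b) \<in> C"
      by (rule subspace_sum[OF C], rule subspace_scale[OF C]) (use T(2) B(2) in blast)
    moreover have "(\<Sum>b\<in>T. u b *s w b) \<in> W"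
      by (rule subspace_sum[OF W], rule subspace_scale[OF W]) (use T(2) w in blast)
    ultimately have "(\<Sum>b\<in>T. u b *s b) = 0" using eq CW by auto
    then show ?thesis using independentD[OF B(1) T] b by blast
  qed
  show inj: "inj_on (\<lambda>b. b - w b) B"
  proof (rule inj_onI, rule ccontr)
    fix b b' assume bb': "b \<in> B" "b' \<in> B" "b - w b = b' - w b'" "b \<noteq> b'"
    have "(\<Sum>v\<in>{b, b'}. (if v = b then 1 else - 1) *s d v) = 0"
      using bb' by (simp add: d_def)
    from coeffs_zero[OF _ _ this, of b] bb' show False by simp
  qed
  show "independent ((\<lambda>b. b - w b) ` B)"
    unfolding independent_explicit_finite_subsets
  proof (intro allI impI ballI)
    fix S u v assume S: "S \<subseteq> (\<lambda>b. b - w b) ` B" "finite S" and sum: "(\<Sum>v\<in>S. u v *s v) = 0"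
      and v: "v \<in> S"
    define T where "T = B \<inter> d -` S"
    have ST: "S = d ` T" using S(1) unfolding T_def d_def by blast
    have T: "T \<subseteq> B" "inj_on d T"
      using inj unfolding T_def d_def by (auto intro: inj_on_subset)
    have "finite T" using S(2) ST T(2) finite_image_iff by blast
    moreover have "(\<Sum>b\<in>T. u (d b) *s d b) = 0" using sum ST T(2) by (simp add: sum.reindex)
    ultimately have "u (d b) = 0" if "b \<in> T" for b
      using coeffs_zero[OF _ T(1), of "\<lambda>b. u (d b)"] that by blast
    then show "u v = 0" using v ST by blast
  qed
qed

lemma dim_le_card_modulo:
  assumes W: "subspace W" and C: "subspace C" and CW: "C \<inter> W \<subseteq> {0}"
    and C_sub: "C \<subseteq> span (U \<union> W)" and U: "finite U"
  shows "dim C \<le> card U"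
proof -
  obtain B where B: "B \<subseteq> C" "independent B" "card B = dim C"
    by (rule basis_exists)
  have "\<exists>w\<in>W. b - w \<in> span U" if b: "b \<in> B" for b
  proof -
    obtain x y where "b = x + y" "x \<in> span U" "y \<in> span W"
      using b B(1) C_sub span_Un[of U W] by blast
    then show ?thesis using W span_eq_iff[of W] by (metis add_diff_cancel_right')
  qed
  then obtain w where w: "\<And>b. b \<in> B \<Longrightarrow> w b \<in> W \<and> b - w b \<in> span U" by metis
  note image = independent_image_sub[OF C W CW B(2,1), of w]
  have "card ((\<lambda>b. b - w b) ` B) \<le> card U"
    using independent_span_bound[OF U image(2)] w by blast
  then show ?thesis using B(3) card_image[OF image(1)] w by simp
qed

end

section \<open>Linear parts\<close>

lemma lookup_Lin:
  "Poly_Mapping.lookup (Lin f) t = (if deg_mon t = 1 then Poly_Mapping.lookup f t else 0)"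
proof -
  have "finite {t. (if deg_mon t = 1 then Poly_Mapping.lookup f t else 0) \<noteq> 0}"
    by (rule finite_subset[OF _ finite_keys[of f]]) (auto simp: in_keys_iff split: if_splits)
  then show ?thesis unfolding Lin_def by simp
qed

lemma deg_mon_single [simp]: "deg_mon (Poly_Mapping.single i k) = k"
  by (simp add: deg_mon_def)

lemma deg_mon_eq_1D:
  assumes "deg_mon t = 1"
  shows "\<exists>j. t = Poly_Mapping.single j 1"
proof -
  obtain j where "Poly_Mapping.lookup t j = 1" "\<forall>i\<in>Poly_Mapping.keys t. i \<noteq> j \<longrightarrow> Poly_Mapping.lookup t i = 0"
    using assms sum_eq_1_iff[of "Poly_Mapping.keys t" "Poly_Mapping.lookup t"] by (auto simp: deg_mon_def)
  then have "t = Poly_Mapping.single j 1"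
    by (intro poly_mapping_eqI) (metis in_keys_iff lookup_single_eq lookup_single_not_eq)
  then show ?thesis ..
qed

lemma Lin_in_span_Var:
  assumes "f \<in> Pring n"
  shows "Lin (f :: 'k::field mpoly) \<in> vs.span (Var ` {..<n})"
proof (subst poly_mapping_sum_single[of "Lin f"], rule vs.span_sum)
  fix t assume "t \<in> Poly_Mapping.keys (Lin f)"
  then have "deg_mon t = 1" and t: "t \<in> Poly_Mapping.keys f"
    by (auto simp: in_keys_iff lookup_Lin split: if_splits)
  then obtain j where j: "t = Poly_Mapping.single j 1"
    using deg_mon_eq_1D by blast
  have "j \<in> indets f" unfolding indets_def using t j by (intro UN_I[of t]) auto
  then have "j < n" using assms by (auto simp: Pring_def)
  have "Poly_Mapping.single t c = pscale c (Var j)" for c :: 'k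
    by (simp add: j pscale_def Var_def Const_def mult_single)
  then show "Poly_Mapping.single t (Poly_Mapping.lookup (Lin f) t) \<in> vs.span (Var ` {..<n})"
    using \<open>j < n\<close> by (auto intro: vs.span_scale vs.span_base)
qed

section \<open>Presentations of quotient algebras\<close>

lemma is_ideal_image:
  fixes I :: "'k::field mpoly set"
  assumes I: "is_ideal n I"
    and \<psi>_Pring: "\<And>p. p \<in> Pring n \<Longrightarrow> \<psi> p \<in> Pring m"
    and \<psi>_add: "\<And>p q. \<psi> (p + q) = \<psi> p + \<psi> q"
    and \<psi>_mult: "\<And>p q. \<psi> (p * q) = \<psi> p * \<psi> q"
    and \<psi>_Const: "\<And>c. \<psi> (Const c) = Const c"
    and s_Pring: "\<And>q. q \<in> Pring m \<Longrightarrow> s q \<in> Pring n"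
    and \<psi>_s: "\<And>q. q \<in> Pring m \<Longrightarrow> \<psi> (s q) = q"
  shows "is_ideal m (\<psi> ` I)"
  unfolding is_ideal_def
proof (intro conjI ballI)
  show "\<psi> ` I \<subseteq> Pring m" using ideal_subset_Pring[OF I] \<psi>_Pring by auto
  show "0 \<in> \<psi> ` I" using ideal_zero[OF I] \<psi>_Const[of 0] by force
next
  fix a b assume "a \<in> \<psi> ` I" "b \<in> \<psi> ` I"
  then show "a + b \<in> \<psi> ` I" using ideal_add[OF I] by (auto simp flip: \<psi>_add)
next
  fix a g :: "'k mpoly" assume "a \<in> \<psi> ` I" and g: "g \<in> Pring m"
  then obtain b where "b \<in> I" "a = \<psi> b" by auto
  then have "g * a = \<psi> (s g * b)" "s g * b \<in> I"
    using g \<psi>_s \<psi>_mult ideal_mult[OF I s_Pring] by auto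
  then show "g * a \<in> \<psi> ` I" by blast
qed

lemma quot_iso_image:
  fixes I :: "'k::field mpoly set"
  assumes I: "is_ideal n I"
    and \<psi>_Pring: "\<And>p. p \<in> Pring n \<Longrightarrow> \<psi> p \<in> Pring m"
    and \<psi>_add: "\<And>p q. \<psi> (p + q) = \<psi> p + \<psi> q"
    and \<psi>_mult: "\<And>p q. \<psi> (p * q) = \<psi> p * \<psi> q"
    and \<psi>_Const: "\<And>c. \<psi> (Const c) = Const c"
    and s_Pring: "\<And>q. q \<in> Pring m \<Longrightarrow> s q \<in> Pring n"
    and \<psi>_s: "\<And>q. q \<in> Pring m \<Longrightarrow> \<psi> (s q) = q"
    and s_\<psi>: "\<And>p. p \<in> Pring n \<Longrightarrow> p - s (\<psi> p) \<in> I"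
  shows "quot_iso n I m (\<psi> ` I)"
proof -
  have I_Pring: "I \<subseteq> Pring n" by (rule ideal_subset_Pring[OF I])
  have "{p \<in> Pring n. \<psi> p \<in> \<psi> ` I} \<subseteq> I"
  proof clarify
    fix p b assume p: "p \<in> Pring n" and b: "b \<in> I" "\<psi> p = \<psi> b"
    then have "p = (p - s (\<psi> p)) - (b - s (\<psi> b)) + b" by simp
    also have "\<dots> \<in> I"
      using ideal_add[OF I ideal_diff[OF I s_\<psi>[OF p] s_\<psi>] b(1)] b(1) I_Pring by blast
    finally show "p \<in> I" .
  qed
  moreover have "\<exists>f\<in>Pring n. q - \<psi> f \<in> \<psi> ` I" if "q \<in> Pring m" for q
    using that is_ideal_image[OF I \<psi>_Pring \<psi>_add \<psi>_mult \<psi>_Const s_Pring \<psi>_s] s_Pring \<psi>_s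
    by (intro bexI[of _ "s q"]) (auto simp: is_ideal_def)
  ultimately show ?thesis
    unfolding quot_iso_def kalg_hom_def using I_Pring \<psi>_Pring \<psi>_add \<psi>_mult \<psi>_Const
    by (intro exI[of _ \<psi>]) auto
qed

lemma finite_enumeration:
  assumes "finite R"
  obtains e e' :: "nat \<Rightarrow> nat"
  where "\<And>i. i \<in> R \<Longrightarrow> e' i < card R \<and> e (e' i) = i" "\<And>j. j < card R \<Longrightarrow> e j \<in> R \<and> e' (e j) = j"
proof -
  obtain e where e: "bij_betw e {..<card R} R"
    using ex_bij_betw_nat_finite[OF assms] by (auto simp: atLeast0LessThan)
  then show ?thesis
    using that[of "inv_into {..<card R} e" e] bij_betw_inv_into[OF e]
      bij_betw_inv_into_right[OF e] bij_betw_inv_into_left[OF e]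
    by (auto simp: bij_betw_def)
qed

lemma subst_Var_rename_id: "(\<And>i. i \<in> indets q \<Longrightarrow> f i = i) \<Longrightarrow> subst (\<lambda>i. Var (f i)) q = q"
  using subst_cong[of q "\<lambda>i. Var (f i)" Var] by simp

text \<open>The variables in \<open>R\<close> are renumbered consecutively from \<open>x\<^sub>0\<close> along an enumeration \<open>e\<close>
  of \<open>R\<close>.\<close>

lemma quot_iso_of_retraction:
  fixes I :: "'k::field mpoly set"
  assumes I: "is_ideal n I" and R: "R \<subseteq> {..<n}"
    and \<sigma>_R: "\<And>i. i < n \<Longrightarrow> indets (\<sigma> i) \<subseteq> R"
    and \<sigma>_I: "\<And>i. i < n \<Longrightarrow> Var i - \<sigma> i \<in> I"
    and \<sigma>_id: "\<And>i. i \<in> R \<Longrightarrow> \<sigma> i = Var i"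
  shows "\<exists>J. is_ideal (card R) J \<and> quot_iso n I (card R) J"
proof -
  obtain e e' where e': "\<And>i. i \<in> R \<Longrightarrow> e' i < card R \<and> e (e' i) = i"
    and e: "\<And>j. j < card R \<Longrightarrow> e j \<in> R \<and> e' (e j) = j"
    by (rule finite_enumeration[OF finite_subset[OF R finite_lessThan]]) blast
  have e'_R: "e' i < card R" and e_e': "e (e' i) = i" if "i \<in> R" for i
    using e'[OF that] by auto
  have e_R: "e j \<in> R" and e'_e: "e' (e j) = j" if "j < card R" for j
    using e[OF that] by auto
  define \<psi> where "\<psi> p = subst (\<lambda>i. Var (e' i)) (subst \<sigma> p)" for p
  define s :: "'k mpoly \<Rightarrow> 'k mpoly" where "s q = subst (\<lambda>j. Var (e j)) q" for q
  have subst_\<sigma>_R: "indets (subst \<sigma> p) \<subseteq> R" if "p \<in> Pring n" for p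
    using indets_subst[of \<sigma> p] \<sigma>_R that by (fastforce simp: Pring_def)
  have \<sigma>_Pring: "\<sigma> i \<in> Pring n" if "i < n" for i
    using \<sigma>_R[OF that] R by (auto simp: Pring_def)
  have \<psi>_Pring: "\<psi> p \<in> Pring (card R)" if "p \<in> Pring n" for p
    unfolding \<psi>_def using subst_\<sigma>_R[OF that] e'_R by (intro Pring_subst Pring_Var) auto
  have s_Pring: "s q \<in> Pring n" if "q \<in> Pring (card R)" for q
    unfolding s_def using that e_R R by (intro Pring_subst Pring_Var) (auto simp: Pring_def)
  have \<psi>_s: "\<psi> (s q) = q" if q: "q \<in> Pring (card R)" for q
  proof -
    have "\<psi> (s q) = subst (\<lambda>j. subst (\<lambda>i. Var (e' i)) (\<sigma> (e j))) q"
      by (simp add: \<psi>_def s_def subst_subst)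
    also have "\<dots> = subst (\<lambda>j. Var (e' (e j))) q"
      using q e_R \<sigma>_id by (intro subst_cong) (auto simp: Pring_def)
    also have "\<dots> = q"
      using q e'_e by (intro subst_Var_rename_id) (auto simp: Pring_def)
    finally show ?thesis .
  qed
  have s_\<psi>: "p - s (\<psi> p) \<in> I" if p: "p \<in> Pring n" for p
  proof -
    have "s (subst (\<lambda>i. Var (e' i)) q) = q" if "indets q \<subseteq> R" for q
    proof -
      have "s (subst (\<lambda>i. Var (e' i)) q) = subst (\<lambda>i. Var (e (e' i))) q"
        by (simp add: s_def subst_subst)
      also have "\<dots> = q"
        using that e_e' by (intro subst_Var_rename_id) blast
      finally show ?thesis .
    qed
    then have eq: "s (\<psi> p) = subst \<sigma> p"
      using subst_\<sigma>_R[OF p] by (simp add: \<psi>_def)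
    have "i < n" if "i \<in> indets p" for i
      using p that by (auto simp: Pring_def)
    then have "subst Var p - subst \<sigma> p \<in> I"
      by (intro subst_diff_in_ideal[OF I]) (simp add: \<sigma>_I \<sigma>_Pring Pring_Var)
    with eq show ?thesis by simp
  qed
  have "is_ideal (card R) (\<psi> ` I)"
    by (rule is_ideal_image[OF I \<psi>_Pring _ _ _ s_Pring \<psi>_s]) (simp_all add: \<psi>_def subst_add subst_mult)
  moreover have "quot_iso n I (card R) (\<psi> ` I)"
    by (rule quot_iso_image[OF I \<psi>_Pring _ _ _ s_Pring \<psi>_s s_\<psi>]) (simp_all add: \<psi>_def subst_add subst_mult)
  ultimately show ?thesis by blast
qed

lemma edim_le:
  "is_ideal m J \<Longrightarrow> quot_iso n I m J \<Longrightarrow> edim n I \<le> m"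
  unfolding edim_def by (auto intro: Least_le)

lemma edim_attained:
  assumes "is_ideal n I"
  shows "\<exists>J. is_ideal (edim n I) J \<and> quot_iso n I (edim n I) J"
proof -
  have "\<exists>J. is_ideal n J \<and> quot_iso n I n J"
    using quot_iso_of_retraction[OF assms, of "{..<n}" Var] ideal_zero[OF assms] indets_Var by fastforce
  then show ?thesis
    unfolding edim_def by (rule LeastI_ex[OF exI])
qed

section \<open>The cotangent space\<close>

lemma ideal_prod_mult: "a \<in> A \<Longrightarrow> b \<in> B \<Longrightarrow> a * b \<in> ideal_prod A B"
  unfolding ideal_prod_def by (intro CollectI exI[of _ "\<lambda>_. a"] exI[of _ "\<lambda>_. b"] exI[of _ 1]) simp

lemma ideal_prod_zero: "0 \<in> ideal_prod A B"
  unfolding ideal_prod_def by (intro CollectI exI[of _ "\<lambda>_. 0"] exI[of _ "\<lambda>_. 0"] exI[of _ "0::nat"]) simp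

lemma ideal_prod_add:
  assumes "x \<in> ideal_prod A B" "y \<in> ideal_prod A B"
  shows "x + y \<in> ideal_prod A B"
proof -
  obtain a1 b1 and k1 :: nat where 1: "x = (\<Sum>i<k1. a1 i * b1 i)" "\<forall>i<k1. a1 i \<in> A \<and> b1 i \<in> B"
    using assms(1) by (auto simp: ideal_prod_def)
  obtain a2 b2 and k2 :: nat where 2: "y = (\<Sum>i<k2. a2 i * b2 i)" "\<forall>i<k2. a2 i \<in> A \<and> b2 i \<in> B"
    using assms(2) by (auto simp: ideal_prod_def)
  define a where "a i = (if i < k1 then a1 i else a2 (i - k1))" for i
  define b where "b i = (if i < k1 then b1 i else b2 (i - k1))" for i
  have "(\<Sum>i<k1 + k2. a i * b i) = (\<Sum>i<k1. a i * b i) + (\<Sum>i<k2. a (k1 + i) * b (k1 + i))"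
    by (induction k2) (simp_all add: add.assoc)
  also have "\<dots> = x + y" using 1 2 by (simp add: a_def b_def)
  finally show ?thesis
    using 1 2 unfolding ideal_prod_def by (intro CollectI exI[of _ a] exI[of _ b] exI[of _ "k1 + k2"]) (auto simp: a_def b_def)
qed

lemma Mideal_sq_pscale:
  assumes "x \<in> ideal_prod (Mideal n) (Mideal n)"
  shows "pscale c x \<in> ideal_prod (Mideal n) (Mideal n)"
proof -
  obtain a b and k :: nat where x: "x = (\<Sum>i<k. a i * b i)" "\<forall>i<k. a i \<in> Mideal n \<and> b i \<in> Mideal n"
    using assms by (auto simp: ideal_prod_def)
  then have "pscale c x = (\<Sum>i<k. pscale c (a i) * b i)"
    by (simp add: pscale_def sum_distrib_left mult.assoc)
  then show ?thesis
    using x Mideal_pscale unfolding ideal_prod_def by (intro CollectI exI[of _ "\<lambda>i. pscale c (a i)"] exI[of _ b] exI[of _ k]) auto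
qed

lemma Mideal_sq_subset: "ideal_prod (Mideal n) (Mideal n) \<subseteq> Mideal n"
proof -
  have sum: "sum f A \<in> Mideal n" if "\<And>a. a \<in> A \<Longrightarrow> f a \<in> Mideal n" for f and A :: "nat set"
    using that by (induction A rule: infinite_finite_induct) (auto intro: Mideal_add)
  show ?thesis
    unfolding ideal_prod_def by (auto intro!: sum Mideal_mult)
qed

lemma Mideal_subset_span_Var_Mideal_sq:
  "Mideal n \<subseteq> vs.span (Var ` {..<n} \<union> ideal_prod (Mideal n) (Mideal n :: 'k::field mpoly set))"
proof
  fix p :: "'k mpoly" assume p: "p \<in> Mideal n"
  let ?T = "vs.span (Var ` {..<n} \<union> ideal_prod (Mideal n) (Mideal n))"
  have "Poly_Mapping.single t c \<in> ?T" if t: "t \<in> Poly_Mapping.keys p" for t c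
  proof -
    have "t \<noteq> 0" using t p by (auto simp: Mideal_def in_keys_iff)
    then obtain j where j: "j \<in> Poly_Mapping.keys t"
      by (metis in_keys_iff lookup_zero poly_mapping_eqI)
    define t' where "t' = t - Poly_Mapping.single j 1"
    have tj: "t = Poly_Mapping.single j 1 + t'"
      using j by (auto intro!: poly_mapping_eqI simp: t'_def lookup_add lookup_minus lookup_single when_def in_keys_iff)
    have keys_t: "Poly_Mapping.keys t \<subseteq> {..<n}" using t p by (auto simp: Mideal_def Pring_def indets_def)
    then have "j < n" using j by auto
    have single_t: "Poly_Mapping.single t c = Var j * Poly_Mapping.single t' c"
      by (simp add: Var_def mult_single tj)
    show ?thesis
    proof (cases "t' = 0")
      case True
      then have "Poly_Mapping.single t c = pscale c (Var j)"
        by (simp add: single_t pscale_def Const_def mult.commute)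
      then show ?thesis using \<open>j < n\<close> by (auto intro: vs.span_scale vs.span_base)
    next
      case False
      have "Poly_Mapping.keys t' \<subseteq> Poly_Mapping.keys t" using tj by (auto simp: keys_add_nat)
      then have "Poly_Mapping.single t' c \<in> Mideal n"
        using False keys_t indets_single[of t' c] by (auto simp: Mideal_def Pring_def lookup_single)
      then have "Poly_Mapping.single t c \<in> ideal_prod (Mideal n) (Mideal n)"
        unfolding single_t using Var_in_Mideal[OF \<open>j < n\<close>] by (rule ideal_prod_mult[rotated])
      then show ?thesis by (auto intro: vs.span_base)
    qed
  qed
  then show "p \<in> ?T"
    by (subst poly_mapping_sum_single) (auto intro: vs.span_sum)
qed

lemma subst_mem_Const_plus:
  fixes T :: "'k::field mpoly set"
  assumes T: "vs.subspace T" "T \<subseteq> Mideal n" "ideal_prod (Mideal n) (Mideal n) \<subseteq> T"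
    and F: "\<And>j. j \<in> indets h \<Longrightarrow> F j \<in> {Const k + v | k v. v \<in> T}"
  shows "subst F h \<in> {Const k + v | k v. v \<in> T}"
proof (rule subst_mem_subring)
  fix a b assume "a \<in> {Const k + v | k v. v \<in> T}" "b \<in> {Const k + v | k v. v \<in> T}"
  then obtain k1 v1 k2 v2 where a: "a = Const k1 + v1" "v1 \<in> T" and b: "b = Const k2 + v2" "v2 \<in> T"
    by blast
  have "a + b = Const (k1 + k2) + (v1 + v2)" "v1 + v2 \<in> T"
    using a b T(1) by (auto simp: Const_add algebra_simps vs.subspace_add)
  then show "a + b \<in> {Const k + v | k v. v \<in> T}" by blast
  have "v1 * v2 \<in> T" using a b T(2,3) ideal_prod_mult by blast
  then have "pscale k1 v2 + pscale k2 v1 + v1 * v2 \<in> T"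
    using a b T(1) by (simp add: vs.subspace_add vs.subspace_scale)
  moreover have "a * b = Const (k1 * k2) + (pscale k1 v2 + pscale k2 v1 + v1 * v2)"
    using a b by (simp add: Const_mult pscale_def algebra_simps)
  ultimately show "a * b \<in> {Const k + v | k v. v \<in> T}" by blast
next
  show "Const c \<in> {Const k + v | k v. v \<in> T}" for c
    using vs.subspace_0[OF T(1)] by force
qed (use F in blast)

lemma subst_lift_inverse_mod_ideal:
  fixes I J :: "'k::field mpoly set"
  assumes \<phi>: "kalg_hom n m \<phi>" and ker: "{f \<in> Pring n. \<phi> f \<in> J} = I" and J: "is_ideal m J"
    and F: "\<And>j. j < m \<Longrightarrow> F j \<in> Pring n \<and> Var j - \<phi> (F j) \<in> J"
    and p: "p \<in> Pring n"
  shows "p - subst F (\<phi> p) \<in> I"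
proof -
  have \<phi>_Pring: "\<phi> f \<in> Pring m" if "f \<in> Pring n" for f
    using \<phi> that unfolding kalg_hom_def by auto
  have \<phi>_add: "\<phi> (f + g) = \<phi> f + \<phi> g" and \<phi>_mult: "\<phi> (f * g) = \<phi> f * \<phi> g"
    if "f \<in> Pring n" "g \<in> Pring n" for f g
    using \<phi> that unfolding kalg_hom_def by auto
  have \<phi>_Const: "\<phi> (Const c) = Const c" for c
    using \<phi> unfolding kalg_hom_def by auto
  let ?h = "\<phi> p"
  have h: "j < m" if "j \<in> indets ?h" for j
    using \<phi>_Pring[OF p] that by (auto simp: Pring_def)
  have subst_Pring: "subst F ?h \<in> Pring n"
    using F h by (intro Pring_subst) auto
  have "\<phi> (subst F ?h) = subst (\<phi> \<circ> F) ?h"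
    by (rule hom_subst[where S = "Pring n"])
      (use \<phi>_add \<phi>_mult \<phi>_Const F h in \<open>auto intro: Pring_add Pring_mult\<close>)
  moreover have "subst Var ?h - subst (\<phi> \<circ> F) ?h \<in> J"
    by (rule subst_diff_in_ideal[OF J]) (use F h \<phi>_Pring in \<open>auto intro: Pring_Var\<close>)
  moreover have "\<phi> (p - subst F ?h) = \<phi> p - \<phi> (subst F ?h)"
    using \<phi>_add[OF Pring_diff[OF p subst_Pring] subst_Pring] by (simp add: eq_diff_eq)
  ultimately have "\<phi> (p - subst F ?h) \<in> J" by simp
  then show ?thesis using ker Pring_diff[OF p subst_Pring] by blast
qed

definition Mideal_sq_plus :: "nat \<Rightarrow> 'k::field mpoly set \<Rightarrow> 'k mpoly set" where
  "Mideal_sq_plus n I = {a + b | a b. a \<in> ideal_prod (Mideal n) (Mideal n) \<and> b \<in> I}"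

context
  fixes n :: nat and I :: "'k::field mpoly set"
  assumes I: "is_ideal n I" and I_Mideal: "I \<subseteq> Mideal n"
begin

lemma Mideal_sq_plus_subspace: "vs.subspace (Mideal_sq_plus n I)"
  unfolding vs.subspace_def Mideal_sq_plus_def
proof (intro conjI ballI allI)
  show "0 \<in> {a + b | a b. a \<in> ideal_prod (Mideal n) (Mideal n) \<and> b \<in> I}"
    using ideal_prod_zero ideal_zero[OF I] by force
next
  fix x y assume "x \<in> {a + b | a b. a \<in> ideal_prod (Mideal n) (Mideal n) \<and> b \<in> I}"
    "y \<in> {a + b | a b. a \<in> ideal_prod (Mideal n) (Mideal n) \<and> b \<in> I}"
  then obtain a1 b1 a2 b2 where "x = a1 + b1" "y = a2 + b2" "a1 \<in> ideal_prod (Mideal n) (Mideal n)"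
    "a2 \<in> ideal_prod (Mideal n) (Mideal n)" "b1 \<in> I" "b2 \<in> I"
    by blast
  then have "x + y = (a1 + a2) + (b1 + b2)" "a1 + a2 \<in> ideal_prod (Mideal n) (Mideal n)" "b1 + b2 \<in> I"
    by (auto simp: algebra_simps ideal_prod_add ideal_add[OF I])
  then show "x + y \<in> {a + b | a b. a \<in> ideal_prod (Mideal n) (Mideal n) \<and> b \<in> I}" by blast
next
  fix c x assume "x \<in> {a + b | a b. a \<in> ideal_prod (Mideal n) (Mideal n) \<and> b \<in> I}"
  then obtain a b where "x = a + b" "a \<in> ideal_prod (Mideal n) (Mideal n)" "b \<in> I" by blast
  then have "pscale c x = pscale c a + pscale c b" "pscale c a \<in> ideal_prod (Mideal n) (Mideal n)" "pscale c b \<in> I"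
    using Mideal_sq_pscale ideal_mult[OF I Pring_Const] by (auto simp: pscale_def algebra_simps)
  then show "pscale c x \<in> {a + b | a b. a \<in> ideal_prod (Mideal n) (Mideal n) \<and> b \<in> I}" by blast
qed

lemma Mideal_sq_subset_Mideal_sq_plus: "ideal_prod (Mideal n) (Mideal n) \<subseteq> Mideal_sq_plus n I"
  unfolding Mideal_sq_plus_def using ideal_zero[OF I] by force

lemma ideal_subset_Mideal_sq_plus: "I \<subseteq> Mideal_sq_plus n I"
  unfolding Mideal_sq_plus_def using ideal_prod_zero by force

lemma Mideal_sq_plus_subset_Mideal: "Mideal_sq_plus n I \<subseteq> Mideal n"
  unfolding Mideal_sq_plus_def using Mideal_sq_subset I_Mideal by (auto intro: Mideal_add)

lemma cotdim_le_card:
  assumes "finite U" "Mideal n \<subseteq> vs.span (U \<union> Mideal_sq_plus n I)"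
  shows "cotdim n I \<le> card U"
proof -
  let ?P = "\<lambda>C. vs.subspace C \<and> C \<subseteq> Mideal n \<and> C \<inter> Mideal_sq_plus n I = {0}
               \<and> Mideal n = {c + w | c w. c \<in> C \<and> w \<in> Mideal_sq_plus n I}"
  have "\<exists>C. ?P C"
    by (rule vs.complement_exists[OF Mideal_sq_plus_subspace Mideal_subspace Mideal_sq_plus_subset_Mideal])
  then have "?P (SOME C. ?P C)" by (rule someI_ex)
  moreover have "cotdim n I = kdim (SOME C. ?P C)"
    unfolding cotdim_def qdim_def Mideal_sq_plus_def ..
  ultimately show ?thesis
    using vs.dim_le_card_modulo[OF Mideal_sq_plus_subspace, of "SOME C. ?P C" U] assms
    unfolding kdim_def by auto
qed

text \<open>Modulo \<open>I\<close>, \<open>x\<^sub>i\<close> is a polynomial in the lifts \<open>F j\<close>; modulo \<open>M\<^sup>2\<close> only its constant term,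
  which vanishes, and its linear part in the \<open>F j - F j(0)\<close> survive.\<close>

lemma Var_in_span_lifts:
  assumes \<phi>: "kalg_hom n m \<phi>" and ker: "{f \<in> Pring n. \<phi> f \<in> J} = I" and J: "is_ideal m J"
    and F: "\<And>j. j < m \<Longrightarrow> F j \<in> Pring n \<and> Var j - \<phi> (F j) \<in> J" and i: "i < n"
  shows "Var i \<in> vs.span ((\<lambda>j. F j - Const (Poly_Mapping.lookup (F j) 0)) ` {..<m} \<union> Mideal_sq_plus n I)"
proof -
  define u where "u = (\<lambda>j. F j - Const (Poly_Mapping.lookup (F j) 0))"
  let ?V = "vs.span (u ` {..<m} \<union> Mideal_sq_plus n I)"
  let ?T = "vs.span (u ` {..<m} \<union> ideal_prod (Mideal n) (Mideal n))"
  have "u j \<in> Mideal n" if "j < m" for j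
    using F[OF that] by (simp add: u_def Mideal_def Pring_diff lookup_minus lookup_Const)
  then have "?T \<subseteq> Mideal n"
    using Mideal_sq_subset by (intro vs.span_minimal[OF _ Mideal_subspace]) auto
  then have T: "vs.subspace ?T" "?T \<subseteq> Mideal n" "ideal_prod (Mideal n) (Mideal n) \<subseteq> ?T"
    by (auto intro: vs.span_base)
  have F_T: "F j \<in> {Const k + v | k v. v \<in> ?T}" if "j < m" for j
  proof -
    have "F j = Const (Poly_Mapping.lookup (F j) 0) + u j" by (simp add: u_def)
    moreover have "u j \<in> ?T" using that by (auto intro: vs.span_base)
    ultimately show ?thesis by blast
  qed
  let ?g = "subst F (\<phi> (Var i))"
  have g: "Var i - ?g \<in> I"
    using subst_lift_inverse_mod_ideal[OF \<phi> ker J F Pring_Var[OF i]] .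
  have "\<phi> (Var i) \<in> Pring m" using \<phi> Pring_Var[OF i] by (auto simp: kalg_hom_def)
  then have "?g \<in> {Const k + v | k v. v \<in> ?T}"
    by (intro subst_mem_Const_plus[OF T] F_T) (auto simp: Pring_def)
  then obtain k v where kv: "?g = Const k + v" "v \<in> ?T" by blast
  have "Poly_Mapping.lookup (Var i - ?g) 0 = 0" "Poly_Mapping.lookup v 0 = 0"
    using g I_Mideal kv(2) T(2) by (auto simp: Mideal_def)
  then have "Var i = (Var i - ?g) + v"
    using kv(1) by (simp add: lookup_minus lookup_add lookup_Const lookup_Var)
  moreover have "Var i - ?g \<in> ?V"
    using g ideal_subset_Mideal_sq_plus by (auto intro: vs.span_base)
  moreover have "?T \<subseteq> ?V"
    using Mideal_sq_subset_Mideal_sq_plus by (intro vs.span_mono) auto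
  then have "v \<in> ?V" using kv(2) by blast
  ultimately have "Var i \<in> ?V" by (metis vs.span_add)
  then show ?thesis unfolding u_def .
qed

lemma cotdim_le_of_quot_iso:
  assumes J: "is_ideal m J" and iso: "quot_iso n I m J"
  shows "cotdim n I \<le> m"
proof -
  obtain \<phi> where \<phi>: "kalg_hom n m \<phi>" and ker: "{f \<in> Pring n. \<phi> f \<in> J} = I"
    and surj: "\<forall>q\<in>Pring m. \<exists>f\<in>Pring n. q - \<phi> f \<in> J"
    using iso unfolding quot_iso_def by blast
  have "\<forall>j. \<exists>f. j < m \<longrightarrow> f \<in> Pring n \<and> Var j - \<phi> f \<in> J"
    using surj Pring_Var by blast
  then obtain F where F: "\<And>j. j < m \<Longrightarrow> F j \<in> Pring n \<and> Var j - \<phi> (F j) \<in> J"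
    by metis
  let ?U = "(\<lambda>j. F j - Const (Poly_Mapping.lookup (F j) 0)) ` {..<m}"
  have "Var i \<in> vs.span (?U \<union> Mideal_sq_plus n I)" if "i < n" for i
    using Var_in_span_lifts[OF \<phi> ker J F that] .
  then have "vs.span (Var ` {..<n} \<union> ideal_prod (Mideal n) (Mideal n)) \<subseteq> vs.span (?U \<union> Mideal_sq_plus n I)"
    using Mideal_sq_subset_Mideal_sq_plus by (intro vs.span_minimal) (auto intro: vs.span_base)
  then have "cotdim n I \<le> card ?U"
    using Mideal_subset_span_Var_Mideal_sq by (intro cotdim_le_card) auto
  also have "\<dots> \<le> m"
    using card_image_le[of "{..<m}" "\<lambda>j. F j - Const (Poly_Mapping.lookup (F j) 0)"] by simp
  finally show ?thesis .
qed

end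

section \<open>Separating embedding dimension\<close>

lemma sepdim_candidates_finite:
  "finite {card Z | Z. Z \<subseteq> {..<n} \<and> (\<exists>f. (\<forall>z\<in>Z. f z \<in> I) \<and> coherently_separating n Z f)}"
  by (rule finite_subset[of _ "{..n}"]) (use card_mono[of "{..<n}"] in fastforce)+

lemma sepdim_le:
  assumes "Z \<subseteq> {..<n}" "\<forall>z\<in>Z. f z \<in> I" "coherently_separating n Z f"
  shows "sepdim n I \<le> n - card Z"
proof -
  have "card Z \<le> Max {card Z | Z. Z \<subseteq> {..<n} \<and> (\<exists>f. (\<forall>z\<in>Z. f z \<in> I) \<and> coherently_separating n Z f)}"
    by (rule Max_ge[OF sepdim_candidates_finite]) (use assms in blast)
  then show ?thesis unfolding sepdim_def by simp
qed

lemma sepdim_attained: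
  obtains Z and f :: "nat \<Rightarrow> 'k::field mpoly"
  where "Z \<subseteq> {..<n}" "\<forall>z\<in>Z. f z \<in> I" "coherently_separating n Z f" "sepdim n I = n - card Z"
proof -
  let ?S = "{card Z | Z. Z \<subseteq> {..<n} \<and> (\<exists>f. (\<forall>z\<in>Z. f z \<in> I) \<and> coherently_separating n Z (f :: nat \<Rightarrow> 'k mpoly))}"
  have "0 \<in> ?S" by (auto simp: coherently_separating_def intro!: exI[of _ "{}"])
  then have "Max ?S \<in> ?S" using sepdim_candidates_finite Max_in by blast
  then show ?thesis using that unfolding sepdim_def by auto
qed

text \<open>Each \<open>f\<^sub>z\<close> expresses \<open>x\<^sub>z\<close> modulo \<open>I\<close> as its tail, which involves no variable of \<open>Z\<close>;
  substituting the tails eliminates the variables of \<open>Z\<close>.\<close>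

lemma edim_le_of_coherently_separating:
  fixes I :: "'k::field mpoly set"
  assumes I: "is_ideal n I" and Z: "Z \<subseteq> {..<n}" and f_I: "\<forall>z\<in>Z. f z \<in> I"
    and f: "coherently_separating n Z f"
  shows "edim n I \<le> n - card Z"
proof -
  define \<sigma> where "\<sigma> i = (if i \<in> Z then tail i (f i) else Var i)" for i
  have f_Z: "f z \<in> Mideal n" "separating z (f z)" "\<And>z'. z' \<in> Z \<Longrightarrow> z' \<noteq> z \<Longrightarrow> z \<notin> indets (f z')"
    if "z \<in> Z" for z
    using f that unfolding coherently_separating_def by blast+
  have "indets (\<sigma> i) \<subseteq> {..<n} - Z" if "i < n" for i
  proof (cases "i \<in> Z")
    case True
    have "indets (f i) \<subseteq> {..<n}" using f_Z(1)[OF True] by (auto simp: Mideal_def Pring_def)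
    moreover have "i \<notin> indets (\<sigma> i)" using f_Z(2)[OF True] True by (simp add: \<sigma>_def separating_def)
    ultimately show ?thesis
      using indets_tail[of i "f i"] f_Z(3)[OF _ True] True by (auto simp: \<sigma>_def)
  next
    case False
    then show ?thesis using that indets_Var[of i] by (auto simp: \<sigma>_def)
  qed
  moreover have "Var i - \<sigma> i \<in> I" for i
  proof (cases "i \<in> Z")
    case True
    then have "Var i - \<sigma> i = Const (inverse (Poly_Mapping.lookup (f i) (Poly_Mapping.single i 1))) * f i"
      by (simp add: \<sigma>_def tail_def pscale_def)
    then show ?thesis using True f_I ideal_mult[OF I Pring_Const] by simp
  qed (simp add: \<sigma>_def ideal_zero[OF I])
  ultimately obtain J where "is_ideal (card ({..<n} - Z)) J" "quot_iso n I (card ({..<n} - Z)) J"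
    using quot_iso_of_retraction[OF I, of "{..<n} - Z" \<sigma>] by (auto simp: \<sigma>_def)
  then show ?thesis
    using edim_le Z by (simp add: card_Diff_subset finite_subset)
qed

lemma edim_le_sepdim: "is_ideal n I \<Longrightarrow> edim n I \<le> sepdim n I"
  by (metis sepdim_attained edim_le_of_coherently_separating)

section \<open>Marked reduced Groebner bases\<close>

locale marked_reduced_gb =
  fixes n :: nat and I :: "'k::field mpoly set" and G :: "'k mpoly set"
    and le :: "(nat \<Rightarrow>\<^sub>0 nat) \<Rightarrow> (nat \<Rightarrow>\<^sub>0 nat) \<Rightarrow> bool"
  assumes I_ideal: "is_ideal n I" and I_Mideal: "I \<subseteq> Mideal n"
    and le: "term_order n le" and G: "reduced_GB n le I G"
begin

definition LI_elem :: "nat \<Rightarrow> 'k mpoly" where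
  "LI_elem z = (SOME g. g \<in> G \<and> LT le g = Var z)"

lemma LI_elem:
  assumes "z \<in> LI n le G"
  shows "LI_elem z \<in> G" "LI_elem z \<in> I" "LI_elem z \<noteq> 0" "LI_elem z \<in> Mideal n" "LI_elem z \<in> Pring n"
    "lm le (LI_elem z) = Poly_Mapping.single z 1"
    "Poly_Mapping.lookup (LI_elem z) (Poly_Mapping.single z 1) = 1"
proof -
  have "\<exists>g. g \<in> G \<and> LT le g = Var z" using assms by (auto simp: LI_def)
  then have LT: "LI_elem z \<in> G \<and> LT le (LI_elem z) = Var z"
    unfolding LI_elem_def by (rule someI_ex)
  then show "LI_elem z \<in> G" "LI_elem z \<in> I" "LI_elem z \<noteq> 0"
    using G by (auto simp: reduced_GB_def)
  then show "LI_elem z \<in> Mideal n" "LI_elem z \<in> Pring n"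
    using I_Mideal by (auto simp: Mideal_def)
  show "lm le (LI_elem z) = Poly_Mapping.single z 1"
    "Poly_Mapping.lookup (LI_elem z) (Poly_Mapping.single z 1) = 1"
    using LT_eq_Var[of le "LI_elem z" z] LT by auto
qed

text \<open>By reducedness of \<open>G\<close>, the leading monomial \<open>x\<^sub>z\<close> of \<open>LI_elem z\<close> divides no term of
  another basis element.\<close>

lemma LI_not_in_indets_LI_elem:
  assumes "z \<in> LI n le G" "z' \<in> LI n le G" "z \<noteq> z'"
  shows "z \<notin> indets (LI_elem z')"
proof
  assume "z \<in> indets (LI_elem z')"
  then obtain t where t: "t \<in> Poly_Mapping.keys (LI_elem z')" "z \<in> Poly_Mapping.keys t"
    by (auto simp: indets_def)
  have "mdvd (lm le (LI_elem z)) t"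
    using LI_elem(6)[OF assms(1)] t(2) by (auto simp: mdvd_def lookup_single when_def in_keys_iff)
  moreover have "LI_elem z \<noteq> LI_elem z'"
    using LI_elem(6)[OF assms(1)] LI_elem(6)[OF assms(2)] assms(3) by auto
  ultimately show False
    using G t LI_elem(1)[OF assms(1)] LI_elem(1)[OF assms(2)] unfolding reduced_GB_def by blast
qed

lemma LI_elem_separating:
  assumes "z \<in> LI n le G"
  shows "separating z (LI_elem z)"
proof -
  let ?g = "LI_elem z"
  have tail: "tail z ?g = Var z - ?g"
    unfolding tail_def using LI_elem(7)[OF assms] by (simp add: pscale_def)
  have "z \<notin> Poly_Mapping.keys t" if "t \<in> Poly_Mapping.keys (Var z - ?g)" for t
  proof (cases "t = Poly_Mapping.single z 1")
    case True
    then show ?thesis using that LI_elem(7)[OF assms] by (simp add: in_keys_iff lookup_minus lookup_Var)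
  next
    case False
    then have "t \<in> Poly_Mapping.keys ?g" using that by (simp add: in_keys_iff lookup_minus lookup_Var)
    then show ?thesis
      using lm_eq_Var_not_in_other_terms[OF le LI_elem(5,3,6)[OF assms] _ False] by blast
  qed
  then show ?thesis
    unfolding separating_def using tail LI_elem(7)[OF assms] by (auto simp: indets_def)
qed

lemma coherently_separating_LI: "coherently_separating n (LI n le G) LI_elem"
  unfolding coherently_separating_def
  using LI_elem LI_elem_separating LI_not_in_indets_LI_elem by (auto simp: LI_def)

lemma sepdim_le_LI: "sepdim n I \<le> n - card (LI n le G)"
  by (rule sepdim_le[OF _ _ coherently_separating_LI]) (auto simp: LI_def LI_elem)

lemma lookup_Lin_LI_elem:
  assumes "z \<in> LI n le G" "k \<in> LI n le G"
  shows "Poly_Mapping.lookup (Lin (LI_elem z)) (Poly_Mapping.single k 1) = (if k = z then 1 else 0)"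
proof -
  have "Poly_Mapping.single k 1 \<notin> Poly_Mapping.keys (LI_elem z)" if "k \<noteq> z"
    using LI_not_in_indets_LI_elem[OF assms(2,1) that] by (auto simp: indets_def)
  then show ?thesis
    using LI_elem(7)[OF assms(1)] by (auto simp: lookup_Lin in_keys_iff)
qed

lemma card_LI_le_kdim_LinI: "card (LI n le G) \<le> kdim (LinI I)"
proof -
  let ?L = "\<lambda>z. Lin (LI_elem z)"
  have fin: "finite (LI n le G)" by (rule finite_subset[of _ "{..<n}"]) (auto simp: LI_def)
  have inj: "inj_on ?L (LI n le G)"
  proof (rule inj_onI)
    fix z z' assume z: "z \<in> LI n le G" "z' \<in> LI n le G" "?L z = ?L z'"
    then show "z = z'"
      using lookup_Lin_LI_elem[OF z(1) z(1)] lookup_Lin_LI_elem[OF z(2) z(1)] by (auto split: if_splits)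
  qed
  have "vs.independent (?L ` LI n le G)"
  proof (rule vs.independent_if_scalars_zero)
    fix f x assume sum: "(\<Sum>x\<in>?L ` LI n le G. pscale (f x) x) = 0" and "x \<in> ?L ` LI n le G"
    then obtain z where z: "z \<in> LI n le G" "x = ?L z" by auto
    have "0 = Poly_Mapping.lookup (\<Sum>x\<in>?L ` LI n le G. pscale (f x) x) (Poly_Mapping.single z 1)"
      using sum by simp
    also have "\<dots> = (\<Sum>k\<in>LI n le G. f (?L k) * Poly_Mapping.lookup (?L k) (Poly_Mapping.single z 1))"
      by (simp add: lookup_sum sum.reindex[OF inj])
    also have "\<dots> = (\<Sum>k\<in>LI n le G. if k = z then f (?L k) else 0)"
      by (rule sum.cong) (use lookup_Lin_LI_elem z(1) in auto)
    also have "\<dots> = f x" using fin z by simp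
    finally show "f x = 0" ..
  qed (use fin in simp)
  moreover have "?L ` LI n le G \<subseteq> LinI I"
    unfolding LinI_def using LI_elem(2) by (auto intro: vs.span_base)
  moreover have "LinI I \<subseteq> vs.span (Var ` {..<n})"
    unfolding LinI_def using Lin_in_span_Var ideal_subset_Pring[OF I_ideal]
    by (intro vs.span_minimal) auto
  ultimately have "card (?L ` LI n le G) \<le> kdim (LinI I)"
    unfolding kdim_def by (rule vs.independent_card_le_dim) simp
  then show ?thesis by (simp add: card_image[OF inj])
qed

end

theorem theorem4p1:
  fixes n :: nat and I :: "('k::field) mpoly set" and G :: "'k mpoly set"
    and le :: "(nat \<Rightarrow>\<^sub>0 nat) \<Rightarrow> (nat \<Rightarrow>\<^sub>0 nat) \<Rightarrow> bool"
  assumes "is_ideal n I" and "I \<subseteq> Mideal n"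
    and "term_order n le" and "reduced_GB n le I G"
  shows "card (LI n le G) \<le> kdim (LinI I) \<and>
         (cotdim n I \<le> edim n I \<and> edim n I \<le> sepdim n I \<and> sepdim n I \<le> n - card (LI n le G))"
proof -
  interpret marked_reduced_gb n I G le
    using assms by unfold_locales
  obtain J where "is_ideal (edim n I) J" "quot_iso n I (edim n I) J"
    using edim_attained[OF assms(1)] by blast
  then have "cotdim n I \<le> edim n I"
    by (rule cotdim_le_of_quot_iso[OF assms(1,2)])
  then show ?thesis
    using card_LI_le_kdim_LinI edim_le_sepdim[OF assms(1)] sepdim_le_LI by blast
qed

end
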